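(* Assume the standing assumptions below (Assumption A). Let $\alpha>0$, let $\varphi_i\in X_\alpha$ with $\varphi_i\ge0$ and $\tau_{i0}>0$ for $i=1,\dots,n$. Then the corresponding solution $(A_1,\dots,A_n)$ of the $n$-species system (S) is bounded on $[0,+\infty)$.
   Context: For $\alpha>0$, $X_\alpha:=\{\phi\in C((-\infty,0]): e^{-\alpha|\cdot|}\phi(\cdot)\in BUC((-\infty,0])\cap \mathrm{Lip}((-\infty,0])\}$ ($BUC$: bounded uniformly continuous, $\mathrm{Lip}$: Lipschitz). The $n$-species system (S): for $i=1,\dots,n$, $$A_i'(t)=-\mu_{A_i}A_i(t)+\beta_i e^{-\mu_{J_i}\tau_i(t)}\frac{f_i(Z_i(t))}{f_i(Z_i(t-\tau_i(t)))}A_i(t-\tau_i(t)),\quad t\ge0,$$ $$\int_{t-\tau_i(t)}^{t}f_i(Z_i(\sigma))\,d\sigma=\int_{-\tau_{i0}}^{0}f_i(Z_{i\varphi}(\sigma))\,d\sigma,\quad t\ge0,$$ with $A_i(t)=\varphi_i(t)$ for $t\le0$, $\tau_i(0)=\tau_{i0}\ge0$, where $Z_i(t)=\sum_{j=1}^n\zeta_{ij}A_j(t)$, $Z_{i\varphi}(t)=\sum_{j=1}^n\zeta_{ij}\varphi_j(t)$, $\zeta_{ij}\ge0$. A solution consists of continuous $A_i:\mathbb{R}\to[0,\infty)$, differentiable on $[0,\infty)$, and $\tau_i:[0,\infty)\to[0,\infty)$ satisfying these equations for all $t\ge0$. Assumption A: for each $i$, (i) $\mu_{A_i}>0$, $\mu_{J_i}>0$,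 $\beta_i>0$, $\zeta_{ii}>0$; (ii) $f_i:\mathbb{R}\to(0,\infty)$ is Lipschitz continuous and continuously differentiable with $f_i>0$, $f_i'\le0$ on $\mathbb{R}$, $\lim_{x\to+\infty}f_i(x)=0$, and $\sup_{x\ge0}\frac{f_i(x)}{f_i(cx)}<+\infty$ for every $c\ge1$. *)

theory Defs
  imports "HOL-Analysis.Analysis"
begin

definition X_alpha :: "real \<Rightarrow> (real \<Rightarrow> real) \<Rightarrow> bool" where
  "X_alpha \<alpha> \<phi> \<longleftrightarrow>
     continuous_on {..0} \<phi> \<and>
     (let g = (\<lambda>s. exp (- \<alpha> * \<bar>s\<bar>) * \<phi> s) in
        bounded (g ` {..0}) \<and> uniformly_continuous_on {..0} g \<and>
        (\<exists>L. L-lipschitz_on {..0} g))"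

definition assumption_A ::
  "nat \<Rightarrow> (nat \<Rightarrow> real) \<Rightarrow> (nat \<Rightarrow> real) \<Rightarrow> (nat \<Rightarrow> real) \<Rightarrow>
   (nat \<Rightarrow> nat \<Rightarrow> real) \<Rightarrow> (nat \<Rightarrow> real \<Rightarrow> real) \<Rightarrow> bool" where
  "assumption_A n muA muJ beta zeta f \<longleftrightarrow>
     (\<forall>i<n. muA i > 0 \<and> muJ i > 0 \<and> beta i > 0 \<and> zeta i i > 0 \<and>
        (\<forall>j<n. zeta i j \<ge> 0) \<and>
        (\<exists>L. L-lipschitz_on UNIV (f i)) \<and>
        (\<exists>f'. (\<forall>x. (f i has_real_derivative f' x) (at x)) \<and> continuous_on UNIV f' \<and>
              (\<forall>x. f' x \<le> 0)) \<and>
        (\<forall>x. f i x > 0) \<and>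
        ((f i) \<longlongrightarrow> 0) at_top \<and>
        (\<forall>c\<ge>1. bdd_above ((\<lambda>x. f i x / f i (c * x)) ` {0..})))"

definition Zsum :: "nat \<Rightarrow> (nat \<Rightarrow> nat \<Rightarrow> real) \<Rightarrow> (nat \<Rightarrow> real \<Rightarrow> real) \<Rightarrow> nat \<Rightarrow> real \<Rightarrow> real" where
  "Zsum n zeta A i t = (\<Sum>j<n. zeta i j * A j t)"

definition is_solution_S ::
  "nat \<Rightarrow> (nat \<Rightarrow> real) \<Rightarrow> (nat \<Rightarrow> real) \<Rightarrow> (nat \<Rightarrow> real) \<Rightarrow>
   (nat \<Rightarrow> nat \<Rightarrow> real) \<Rightarrow> (nat \<Rightarrow> real \<Rightarrow> real) \<Rightarrow>
   (nat \<Rightarrow> real \<Rightarrow> real) \<Rightarrow> (nat \<Rightarrow> real) \<Rightarrow>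
   (nat \<Rightarrow> real \<Rightarrow> real) \<Rightarrow> (nat \<Rightarrow> real \<Rightarrow> real) \<Rightarrow> bool" where
  "is_solution_S n muA muJ beta zeta f \<phi> tau0 A \<tau> \<longleftrightarrow>
     (\<forall>i<n.
        continuous_on UNIV (A i) \<and>
        (\<forall>t. A i t \<ge> 0) \<and>
        (\<forall>t\<le>0. A i t = \<phi> i t) \<and>
        \<tau> i 0 = tau0 i \<and>
        (\<forall>t\<ge>0. \<tau> i t \<ge> 0) \<and>
        (\<forall>t\<ge>0. (A i has_real_derivative
             (- muA i * A i t
              + beta i * exp (- muJ i * \<tau> i t)
                * (f i (Zsum n zeta A i t) / f i (Zsum n zeta A i (t - \<tau> i t)))
                * A i (t - \<tau> i t))) (at t within {0..})) \<and>
        (\<forall>t\<ge>0. integral {t - \<tau> i t..t} (\<lambda>s. f i (Zsum n zeta A i s))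
                 = integral {- tau0 i..0} (\<lambda>s. f i (Zsum n zeta \<phi> i s))))"

end

theory Submission
  imports Defs
begin

text \<open>
  Suppose species i is the first to reach a large level M, at time t. Then A_i'(t) \<ge> 0, and as
  f_i is decreasing, the ratio f_i(Z_i(t)) / f_i(Z_i(t - \<tau>_i(t))) is bounded by the ratio condition
  of Assumption A. So the birth term can balance the death term \<mu>_A_i M only if the delay
  \<tau>_i(t) is shorter than a constant T and A_i(t - \<tau>_i(t)) is of order M. If t - \<tau>_i(t) < 0
  this contradicts the bounded history. Otherwise A_i, which decays at most exponentially,
  stays of order M on the whole delay window, so f_i(Z_i) is small there and its integral over
  the window falls below the value fixed by the threshold condition.
\<close>

lemma exp_decay_lower_bound:
  fixes g :: "real \<Rightarrow> real"
  assumes "a \<le> s" and cont: "continuous_on {a..s} g"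
    and deriv: "\<And>x. x \<in> {a<..<s} \<Longrightarrow> \<exists>d. (g has_real_derivative d) (at x) \<and> - \<mu> * g x \<le> d"
  shows "g a * exp (- \<mu> * (s - a)) \<le> g s"
proof -
  have "g a * exp (\<mu> * a) \<le> g s * exp (\<mu> * s)"
  proof (rule DERIV_nonneg_imp_increasing_open[OF \<open>a \<le> s\<close>])
    fix x assume "a < x" "x < s"
    then obtain d where d: "(g has_real_derivative d) (at x)" "- \<mu> * g x \<le> d"
      using deriv by auto
    have "((\<lambda>x. g x * exp (\<mu> * x)) has_real_derivative (d + \<mu> * g x) * exp (\<mu> * x)) (at x)"
      by (auto intro!: derivative_eq_intros d(1) simp: algebra_simps)
    moreover have "(d + \<mu> * g x) * exp (\<mu> * x) \<ge> 0"
      using d(2) by simp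
    ultimately show "\<exists>y. ((\<lambda>x. g x * exp (\<mu> * x)) has_real_derivative y) (at x) \<and> 0 \<le> y"
      by blast
  qed (intro continuous_intros cont)
  then show ?thesis
    by (simp add: algebra_simps exp_diff exp_minus divide_simps)
qed

lemma deriv_nonneg_at_left_max:
  fixes g :: "real \<Rightarrow> real"
  assumes "(g has_real_derivative l) (at t)" "a < t" "\<And>s. s \<in> {a..<t} \<Longrightarrow> g s \<le> g t"
  shows "0 \<le> l"
proof (rule ccontr)
  assume "\<not> 0 \<le> l"
  then obtain d where "d > 0" and dec: "\<And>h. 0 < h \<Longrightarrow> h < d \<Longrightarrow> g t < g (t - h)"
    using DERIV_neg_dec_left[OF assms(1)] by force
  define h where "h = min (d / 2) (t - a)"
  have "g t < g (t - h)" using \<open>d > 0\<close> \<open>a < t\<close> by (intro dec) (auto simp: h_def)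
  moreover have "g (t - h) \<le> g t" using \<open>d > 0\<close> \<open>a < t\<close> by (intro assms(3)) (auto simp: h_def)
  ultimately show False by simp
qed

lemma first_hitting_time:
  fixes g :: "'i \<Rightarrow> real \<Rightarrow> real"
  assumes "finite I" and cont: "\<And>j. j \<in> I \<Longrightarrow> continuous_on {0..} (g j)"
    and "i \<in> I" "0 \<le> t" "M \<le> g i t"
  obtains ts k where "0 \<le> ts" "k \<in> I" "M \<le> g k ts"
    "\<And>j s. j \<in> I \<Longrightarrow> s \<in> {0..<ts} \<Longrightarrow> g j s < M"
proof -
  define S where "S = (\<Union>j\<in>I. {s \<in> {0..}. M \<le> g j s})"
  have "closed S"
    unfolding S_def using \<open>finite I\<close> cont
    by (intro closed_UN ballI continuous_on_closed_Collect_le continuous_on_const) auto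
  moreover have "S \<noteq> {}" "bdd_below S"
    using assms(3-5) by (auto simp: S_def bdd_below_def)
  ultimately have "Inf S \<in> S" by (rule closed_contains_Inf[rotated -1])
  moreover have "g j s < M" if "j \<in> I" "s \<in> {0..<Inf S}" for j s
  proof (rule ccontr)
    assume "\<not> g j s < M"
    then have "s \<in> S" using that unfolding S_def by (force simp: not_less)
    then show False using cInf_lower[OF _ \<open>bdd_below S\<close>] that(2) by fastforce
  qed
  ultimately show ?thesis using that by (auto simp: S_def)
qed

lemma antimono_ratio_le_SUP:
  fixes f :: "real \<Rightarrow> real"
  assumes pos: "\<And>x. 0 < f x" and anti: "antimono f"
    and bdd: "bdd_above ((\<lambda>u. f u / f (c * u)) ` {0..})"
    and "0 \<le> u" "u \<le> x" "y \<le> c * u"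
  shows "f x / f y \<le> (SUP u\<in>{0..}. f u / f (c * u))"
proof -
  have "f x / f y \<le> f u / f (c * u)"
    using pos assms(4-6) by (intro frac_le antimonoD[OF anti]) (auto simp: less_imp_le)
  also have "\<dots> \<le> (SUP u\<in>{0..}. f u / f (c * u))"
    using bdd \<open>0 \<le> u\<close> by (intro cSUP_upper) auto
  finally show ?thesis .
qed

lemma short_delay_of_balance:
  fixes \<mu> \<nu> c M a \<tau> :: real
  assumes "0 < \<mu>" "0 < \<nu>" "0 < M" "0 \<le> a" "a \<le> M" "0 \<le> c"
    and balance: "\<mu> * M \<le> exp (- \<nu> * \<tau>) * c * a"
  shows "\<tau> < c / (\<mu> * \<nu>)"
proof (rule ccontr)
  assume "\<not> \<tau> < c / (\<mu> * \<nu>)"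
  then have "c / \<mu> \<le> \<nu> * \<tau>"
    using assms(1,2) by (simp add: field_simps)
  then have "c / \<mu> < exp (\<nu> * \<tau>)"
    using exp_gt_zero[of "\<nu> * \<tau>"] exp_ge_add_one_self[of "\<nu> * \<tau>"] by linarith
  then have "exp (- \<nu> * \<tau>) * c < \<mu>"
    using assms(1) by (simp add: exp_minus field_simps)
  then have "exp (- \<nu> * \<tau>) * c * M < \<mu> * M"
    using \<open>0 < M\<close> by simp
  moreover have "exp (- \<nu> * \<tau>) * c * a \<le> exp (- \<nu> * \<tau>) * c * M"
    using assms(5,6) by (intro mult_left_mono) auto
  ultimately show False using balance by linarith
qed

locale species_system =
  fixes n :: nat
    and muA muJ beta :: "nat \<Rightarrow> real"
    and zeta :: "nat \<Rightarrow> nat \<Rightarrow> real"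
    and f :: "nat \<Rightarrow> real \<Rightarrow> real"
    and \<phi> :: "nat \<Rightarrow> real \<Rightarrow> real"
    and tau0 :: "nat \<Rightarrow> real"
    and A \<tau> :: "nat \<Rightarrow> real \<Rightarrow> real"
  assumes assumption_A: "assumption_A n muA muJ beta zeta f"
    and solution: "is_solution_S n muA muJ beta zeta f \<phi> tau0 A \<tau>"
    and tau0_pos: "\<And>i. i < n \<Longrightarrow> 0 < tau0 i"
begin

abbreviation Z :: "nat \<Rightarrow> real \<Rightarrow> real" where
  "Z \<equiv> Zsum n zeta A"

definition K :: "nat \<Rightarrow> real" where
  "K i = (\<Sum>j<n. zeta i j)"

definition delay_mass :: "nat \<Rightarrow> real" where
  "delay_mass i = integral {- tau0 i..0} (\<lambda>s. f i (Z i s))"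

definition ratio_bound :: "nat \<Rightarrow> real" where
  "ratio_bound i = max 1 (SUP u\<in>{0..}. f i u / f i (K i / zeta i i * u))"

definition birth_gain :: "nat \<Rightarrow> real" where
  "birth_gain i = beta i * ratio_bound i"

text \<open>\<open>max_delay i\<close> is the constant T of the proof idea; \<open>window_factor i * M\<close> bounds \<open>Z i\<close>
  from below on the delay window of a first hitting time of level M.\<close>

definition max_delay :: "nat \<Rightarrow> real" where
  "max_delay i = birth_gain i / (muA i * muJ i)"

definition window_factor :: "nat \<Rightarrow> real" where
  "window_factor i = zeta i i * muA i * exp (- muA i * max_delay i) / birth_gain i"

lemma A_continuous: "j < n \<Longrightarrow> continuous_on UNIV (A j)"
  using solution unfolding is_solution_S_def by auto

lemma A_nonneg: "j < n \<Longrightarrow> 0 \<le> A j t"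
  using solution unfolding is_solution_S_def by auto

lemma A_bounded_above_on_interval:
  obtains \<Phi> where "\<And>j t. j < n \<Longrightarrow> t \<in> {a..b} \<Longrightarrow> A j t \<le> \<Phi>"
proof -
  have "compact (\<Union>j<n. A j ` {a..b})"
    using A_continuous
    by (intro compact_UN ballI compact_continuous_image) (auto intro: continuous_on_subset)
  then obtain \<Phi> where \<Phi>: "\<And>y. y \<in> (\<Union>j<n. A j ` {a..b}) \<Longrightarrow> \<bar>y\<bar> \<le> \<Phi>"
    using compact_imp_bounded bounded_real by metis
  show ?thesis
  proof (rule that)
    fix j t assume "j < n" "t \<in> {a..b}"
    then have "A j t \<in> (\<Union>j<n. A j ` {a..b})" by blast
    then show "A j t \<le> \<Phi>" using abs_le_D1[OF \<Phi>] by blast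
  qed
qed

context
  fixes i assumes i: "i < n"
begin

lemma rates_pos: "0 < muA i" "0 < muJ i" "0 < beta i" "0 < zeta i i"
  using assumption_A i unfolding assumption_A_def by auto

lemma zeta_nonneg: "j < n \<Longrightarrow> 0 \<le> zeta i j"
  using assumption_A i unfolding assumption_A_def by auto

lemma f_pos: "0 < f i x"
  using assumption_A i unfolding assumption_A_def by auto

lemma f_tendsto_0: "(f i \<longlongrightarrow> 0) at_top"
  using assumption_A i unfolding assumption_A_def by auto

lemma f_antimono: "antimono (f i)"
proof -
  have "\<exists>f'. (\<forall>x. (f i has_real_derivative f' x) (at x)) \<and> continuous_on UNIV f'
      \<and> (\<forall>x. f' x \<le> 0)"
    using assumption_A i unfolding assumption_A_def by auto
  then obtain f' where "\<forall>x. (f i has_real_derivative f' x) (at x)" "\<forall>x. f' x \<le> 0"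
    by blast
  then show ?thesis
    using DERIV_nonpos_imp_nonincreasing[where f = "f i"] by (metis antimonoI)
qed

lemma f_continuous: "continuous_on UNIV (f i)"
  using assumption_A i unfolding assumption_A_def by (blast intro: lipschitz_on_continuous_on)

lemma f_ratio_bdd_above:
  assumes "1 \<le> c"
  shows "bdd_above ((\<lambda>u. f i u / f i (c * u)) ` {0..})"
proof -
  have "\<forall>c\<ge>1. bdd_above ((\<lambda>u. f i u / f i (c * u)) ` {0..})"
    using assumption_A i unfolding assumption_A_def by auto
  then show ?thesis
    using assms by simp
qed

lemma delay_nonneg: "0 \<le> t \<Longrightarrow> 0 \<le> \<tau> i t"
  using solution i unfolding is_solution_S_def by auto

lemma A_has_derivative:
  assumes "0 < t"
  shows "(A i has_real_derivative - muA i * A i t + beta i * exp (- muJ i * \<tau> i t)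
           * (f i (Z i t) / f i (Z i (t - \<tau> i t))) * A i (t - \<tau> i t)) (at t)"
proof -
  have "\<forall>t\<ge>0. (A i has_real_derivative - muA i * A i t + beta i * exp (- muJ i * \<tau> i t)
           * (f i (Z i t) / f i (Z i (t - \<tau> i t))) * A i (t - \<tau> i t)) (at t within {0..})"
    using solution i unfolding is_solution_S_def by auto
  moreover have "at t within {0..} = at t"
    using assms by (intro at_within_interior) auto
  ultimately show ?thesis
    using assms by (metis less_imp_le)
qed

lemma Z_continuous: "continuous_on UNIV (Z i)"
proof -
  have "Z i = (\<lambda>t. \<Sum>j<n. zeta i j * A j t)"
    by (simp add: fun_eq_iff Zsum_def)
  then show ?thesis
    using A_continuous by (auto intro!: continuous_intros)
qed

lemma f_Z_continuous: "continuous_on S (\<lambda>s. f i (Z i s))"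
  by (rule continuous_on_compose2[OF f_continuous continuous_on_subset[OF Z_continuous]]) auto

lemma diag_le_Z: "zeta i i * A i s \<le> Z i s"
  unfolding Zsum_def using i zeta_nonneg A_nonneg
  by (intro member_le_sum[of i "{..<n}" "\<lambda>j. zeta i j * A j s"]) auto

lemma Z_le_K:
  assumes "\<And>j. j < n \<Longrightarrow> A j s \<le> M"
  shows "Z i s \<le> K i * M"
proof -
  have "Z i s \<le> (\<Sum>j<n. zeta i j * M)"
    unfolding Zsum_def using assms zeta_nonneg by (intro sum_mono mult_left_mono) auto
  then show ?thesis
    by (simp add: K_def sum_distrib_right)
qed

lemma diag_le_K: "zeta i i \<le> K i"
  unfolding K_def using i zeta_nonneg by (intro member_le_sum) auto

lemma delay_integral:
  assumes "0 \<le> t"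
  shows "integral {t - \<tau> i t..t} (\<lambda>s. f i (Z i s)) = delay_mass i"
proof -
  have "integral {t - \<tau> i t..t} (\<lambda>s. f i (Z i s))
        = integral {- tau0 i..0} (\<lambda>s. f i (Zsum n zeta \<phi> i s))"
    using solution i assms unfolding is_solution_S_def by auto
  also have "\<dots> = delay_mass i"
    unfolding delay_mass_def using solution
    by (intro integral_cong) (auto simp: Zsum_def is_solution_S_def)
  finally show ?thesis .
qed

lemma integral_f_Z_pos: "a < b \<Longrightarrow> 0 < integral {a..b} (\<lambda>s. f i (Z i s))"
  using integral_less_real[of a b "\<lambda>_. 0" "\<lambda>s. f i (Z i s)"] f_Z_continuous f_pos by auto

lemma delay_mass_pos: "0 < delay_mass i"
  unfolding delay_mass_def using tau0_pos[OF i] by (intro integral_f_Z_pos) simp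

lemma delay_pos:
  assumes "0 \<le> t"
  shows "0 < \<tau> i t"
proof (rule ccontr)
  assume "\<not> 0 < \<tau> i t"
  then have "\<tau> i t = 0"
    using delay_nonneg[OF assms] by simp
  then show False
    using delay_integral[OF assms] delay_mass_pos by simp
qed

lemma delayed_time_ge:
  assumes "0 \<le> t"
  shows "- tau0 i \<le> t - \<tau> i t"
proof (rule ccontr)
  assume "\<not> - tau0 i \<le> t - \<tau> i t"
  then have L: "t - \<tau> i t < - tau0 i" by simp
  let ?I = "\<lambda>a b. integral {a..b} (\<lambda>s. f i (Z i s))"
  have int: "(\<lambda>s. f i (Z i s)) integrable_on {a..b}" for a b
    by (rule integrable_continuous_interval[OF f_Z_continuous])
  have "?I (t - \<tau> i t) t = ?I (t - \<tau> i t) (- tau0 i) + ?I (- tau0 i) 0 + ?I 0 t"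
    using L assms tau0_pos[OF i] int
    by (simp add: Henstock_Kurzweil_Integration.integral_combine)
  moreover have "0 \<le> ?I 0 t"
    using int f_pos by (intro integral_nonneg) (auto simp: less_imp_le)
  moreover have "0 < ?I (t - \<tau> i t) (- tau0 i)"
    using L by (rule integral_f_Z_pos)
  ultimately show False
    using delay_integral[OF assms] unfolding delay_mass_def by linarith
qed

lemma ratio_bound_pos: "0 < ratio_bound i"
  unfolding ratio_bound_def by simp

lemma birth_gain_pos: "0 < birth_gain i"
  unfolding birth_gain_def using rates_pos(3) ratio_bound_pos by simp

lemma max_delay_pos: "0 < max_delay i"
  unfolding max_delay_def using rates_pos birth_gain_pos by simp

lemma window_factor_pos: "0 < window_factor i"
  unfolding window_factor_def using rates_pos birth_gain_pos by simp

lemma f_ratio_le_ratio_bound: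
  assumes "0 \<le> M" "zeta i i * M \<le> x" "y \<le> K i * M"
  shows "f i x / f i y \<le> ratio_bound i"
proof -
  have "1 \<le> K i / zeta i i"
    using diag_le_K rates_pos(4) by simp
  then have "bdd_above ((\<lambda>u. f i u / f i (K i / zeta i i * u)) ` {0..})"
    by (rule f_ratio_bdd_above)
  moreover have "y \<le> K i / zeta i i * (zeta i i * M)"
    using assms(3) rates_pos(4) by simp
  ultimately have "f i x / f i y \<le> (SUP u\<in>{0..}. f i u / f i (K i / zeta i i * u))"
    using assms rates_pos(4) f_pos f_antimono by (intro antimono_ratio_le_SUP) auto
  then show ?thesis
    unfolding ratio_bound_def by linarith
qed

lemma A_ge_exp_decay:
  assumes "0 \<le> L" "L \<le> s"
  shows "A i L * exp (- muA i * (s - L)) \<le> A i s"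
proof (rule exp_decay_lower_bound)
  show "continuous_on {L..s} (A i)"
    using A_continuous[OF i] by (rule continuous_on_subset) simp
  fix x assume "x \<in> {L<..<s}"
  then have "0 < x" using assms by simp
  have "0 \<le> beta i * exp (- muJ i * \<tau> i x) * (f i (Z i x) / f i (Z i (x - \<tau> i x)))
              * A i (x - \<tau> i x)"
    using rates_pos f_pos A_nonneg[OF i] by (auto intro!: mult_nonneg_nonneg simp: less_imp_le)
  then show "\<exists>d. (A i has_real_derivative d) (at x) \<and> - muA i * A i x \<le> d"
    using A_has_derivative[OF \<open>0 < x\<close>] by force
qed (use assms in simp)

lemma balance_at_first_hitting:
  assumes "0 < ts"
    and below: "\<And>j s. j < n \<Longrightarrow> s \<in> {0..<ts} \<Longrightarrow> A j s < M"
    and hit: "M \<le> A i ts"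
    and lag: "\<And>j. j < n \<Longrightarrow> A j (ts - \<tau> i ts) \<le> M"
  shows "muA i * M \<le> exp (- muJ i * \<tau> i ts) * birth_gain i * A i (ts - \<tau> i ts)"
proof -
  define L where "L = ts - \<tau> i ts"
  define ratio where "ratio = f i (Z i ts) / f i (Z i L)"
  have "0 \<le> M"
    using order_trans[OF A_nonneg[OF i] lag[OF i]] .
  have "0 \<le> - muA i * A i ts + beta i * exp (- muJ i * \<tau> i ts) * ratio * A i L"
    unfolding ratio_def L_def
  proof (rule deriv_nonneg_at_left_max[OF A_has_derivative[OF \<open>0 < ts\<close>] \<open>0 < ts\<close>])
    show "A i s \<le> A i ts" if "s \<in> {0..<ts}" for s
      using below[OF i that] hit by simp
  qed
  moreover have "ratio \<le> ratio_bound i"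
    unfolding ratio_def
  proof (rule f_ratio_le_ratio_bound[OF \<open>0 \<le> M\<close>])
    show "zeta i i * M \<le> Z i ts"
      using diag_le_Z[of ts] mult_left_mono[OF hit less_imp_le[OF rates_pos(4)]] by simp
    show "Z i L \<le> K i * M"
      unfolding L_def using lag by (rule Z_le_K)
  qed
  then have "beta i * exp (- muJ i * \<tau> i ts) * ratio * A i L
      \<le> beta i * exp (- muJ i * \<tau> i ts) * ratio_bound i * A i L"
    using rates_pos(3) A_nonneg[OF i] by (intro mult_right_mono mult_left_mono) auto
  ultimately have "muA i * A i ts \<le> exp (- muJ i * \<tau> i ts) * (beta i * ratio_bound i) * A i L"
    by (simp add: algebra_simps)
  moreover have "muA i * M \<le> muA i * A i ts"
    using hit rates_pos(1) by simp
  ultimately show ?thesis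
    unfolding L_def birth_gain_def by linarith
qed

lemma first_hitting_balance:
  assumes "0 < ts"
    and below: "\<And>j s. j < n \<Longrightarrow> s \<in> {0..<ts} \<Longrightarrow> A j s < M"
    and hit: "M \<le> A i ts"
    and lag: "\<And>j. j < n \<Longrightarrow> A j (ts - \<tau> i ts) \<le> M"
    and "0 < M"
  shows "\<tau> i ts < max_delay i"
    and "muA i * M \<le> birth_gain i * A i (ts - \<tau> i ts)"
proof -
  have balance: "muA i * M \<le> exp (- muJ i * \<tau> i ts) * birth_gain i * A i (ts - \<tau> i ts)"
    by (rule balance_at_first_hitting[OF assms(1-4)])
  show "\<tau> i ts < max_delay i"
    unfolding max_delay_def
    using rates_pos(1,2) birth_gain_pos A_nonneg[OF i] lag[OF i] balance \<open>0 < M\<close>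
    by (intro short_delay_of_balance[where M = M and a = "A i (ts - \<tau> i ts)"]) auto
  have "exp (- muJ i * \<tau> i ts) \<le> 1"
    using rates_pos(2) delay_nonneg[of ts] \<open>0 < ts\<close> by simp
  moreover have "0 \<le> birth_gain i * A i (ts - \<tau> i ts)"
    using birth_gain_pos A_nonneg[OF i] by simp
  ultimately have "exp (- muJ i * \<tau> i ts) * birth_gain i * A i (ts - \<tau> i ts)
      \<le> birth_gain i * A i (ts - \<tau> i ts)"
    unfolding mult.assoc by (intro mult_left_le_one_le) auto
  then show "muA i * M \<le> birth_gain i * A i (ts - \<tau> i ts)"
    using balance by linarith
qed

lemma Z_lower_on_delay_window:
  assumes "0 \<le> L" "L \<le> s" "s - L \<le> T" "0 < c"
    and balance: "muA i * M \<le> c * A i L"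
  shows "zeta i i * muA i * exp (- muA i * T) / c * M \<le> Z i s"
proof -
  have "exp (- muA i * T) \<le> exp (- muA i * (s - L))"
    using assms(3) rates_pos(1) by simp
  then have "A i L * exp (- muA i * T) \<le> A i s"
    using order_trans[OF mult_left_mono[OF _ A_nonneg[OF i]] A_ge_exp_decay[OF assms(1,2)]] by simp
  moreover have "muA i * M / c \<le> A i L"
    using balance \<open>0 < c\<close> by (simp add: divide_le_eq mult.commute)
  ultimately have "muA i * M / c * exp (- muA i * T) \<le> A i s"
    using order_trans[OF mult_right_mono[OF _ less_imp_le[OF exp_gt_zero]]] by blast
  then have "zeta i i * (muA i * M / c * exp (- muA i * T)) \<le> zeta i i * A i s"
    using rates_pos(4) by (intro mult_left_mono) auto
  moreover have "zeta i i * muA i * exp (- muA i * T) / c * M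
      = zeta i i * (muA i * M / c * exp (- muA i * T))"
    by simp
  ultimately show ?thesis
    using diag_le_Z[of s] by linarith
qed

lemma delay_mass_le:
  assumes "0 \<le> t" "\<tau> i t \<le> T" and lower: "\<And>s. s \<in> {t - \<tau> i t..t} \<Longrightarrow> x \<le> Z i s"
  shows "delay_mass i \<le> T * f i x"
proof -
  have "delay_mass i = integral {t - \<tau> i t..t} (\<lambda>s. f i (Z i s))"
    using delay_integral[OF assms(1)] by simp
  also have "\<dots> \<le> integral {t - \<tau> i t..t} (\<lambda>_. f i x)"
    using f_antimono lower
    by (intro integral_le integrable_continuous_interval f_Z_continuous) (auto simp: antimonoD)
  also have "\<dots> = \<tau> i t * f i x"
    using delay_nonneg[OF assms(1)] by simp
  also have "\<dots> \<le> T * f i x"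
    using assms(2) f_pos by (simp add: less_imp_le)
  finally show ?thesis .
qed

lemma no_first_hitting:
  assumes history: "\<And>j t. j < n \<Longrightarrow> t \<in> {- tau0 i..0} \<Longrightarrow> A j t \<le> \<Phi>"
    and large: "max \<Phi> (birth_gain i * \<Phi> / muA i) < M"
      "f i (window_factor i * M) < delay_mass i / max_delay i"
    and "0 \<le> ts" and below: "\<And>j s. j < n \<Longrightarrow> s \<in> {0..<ts} \<Longrightarrow> A j s < M"
  shows "A i ts < M"
proof (rule ccontr)
  assume "\<not> A i ts < M"
  then have hit: "M \<le> A i ts" by simp
  define L where "L = ts - \<tau> i ts"
  have L: "- tau0 i \<le> L" "L < ts"
    using delayed_time_ge delay_pos \<open>0 \<le> ts\<close> by (simp_all add: L_def)
  have "ts \<noteq> 0"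
    using history[OF i, of 0] tau0_pos[OF i] hit large(1) by auto
  then have "0 < ts"
    using \<open>0 \<le> ts\<close> by simp
  have "0 < M"
    using history[OF i, of 0] A_nonneg[OF i, of 0] tau0_pos[OF i] large(1) by simp
  have lag: "A j L \<le> M" if "j < n" for j
    using history[OF that, of L] below[OF that, of L] L large(1) by (cases "L < 0") auto
  note hitting = first_hitting_balance[OF \<open>0 < ts\<close> below hit lag[unfolded L_def] \<open>0 < M\<close>]
  show False
  proof (cases "L < 0")
    case True
    have "A i L \<le> \<Phi>"
      using history[OF i, of L] True L(1) by simp
    then have "muA i * M \<le> birth_gain i * \<Phi>"
      using order_trans[OF hitting(2)[folded L_def] mult_left_mono] birth_gain_pos by simp
    then show False
      using large(1) rates_pos(1) by (simp add: divide_less_eq mult.commute)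
  next
    case False
    have "window_factor i * M \<le> Z i s" if "s \<in> {L..ts}" for s
      unfolding window_factor_def using False that hitting birth_gain_pos
      by (intro Z_lower_on_delay_window[where L = L]) (auto simp: L_def)
    then have "delay_mass i \<le> max_delay i * f i (window_factor i * M)"
      using hitting(1) \<open>0 \<le> ts\<close> by (intro delay_mass_le) (auto simp: L_def)
    also have "\<dots> < delay_mass i"
      using large(2) max_delay_pos by (simp add: field_simps)
    finally show False by simp
  qed
qed

lemma eventually_no_hitting:
  "\<forall>\<^sub>F M in at_top. \<forall>ts\<ge>0. (\<forall>j<n. \<forall>s\<in>{0..<ts}. A j s < M) \<longrightarrow> A i ts < M"
proof -
  obtain \<Phi> where history: "\<And>j t. j < n \<Longrightarrow> t \<in> {- tau0 i..0} \<Longrightarrow> A j t \<le> \<Phi>"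
    using A_bounded_above_on_interval[of "- tau0 i" 0] by blast
  have "filterlim (\<lambda>M. window_factor i * M) at_top at_top"
    using window_factor_pos by (intro filterlim_tendsto_pos_mult_at_top filterlim_ident) auto
  then have "((\<lambda>M. f i (window_factor i * M)) \<longlongrightarrow> 0) at_top"
    by (rule filterlim_compose[OF f_tendsto_0])
  then have "\<forall>\<^sub>F M in at_top. f i (window_factor i * M) < delay_mass i / max_delay i"
    using delay_mass_pos max_delay_pos by (intro order_tendstoD(2)) auto
  moreover have "\<forall>\<^sub>F M in at_top. max \<Phi> (birth_gain i * \<Phi> / muA i) < M"
    by (rule eventually_gt_at_top)
  ultimately show ?thesis
    by eventually_elim (use no_first_hitting[OF history] in auto)
qed

end

end

theorem theorem1p5:
  fixes n :: nat
    and muA muJ beta :: "nat \<Rightarrow> real"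
    and zeta :: "nat \<Rightarrow> nat \<Rightarrow> real"
    and f :: "nat \<Rightarrow> real \<Rightarrow> real"
    and \<alpha> :: real
    and \<phi> :: "nat \<Rightarrow> real \<Rightarrow> real"
    and tau0 :: "nat \<Rightarrow> real"
    and A \<tau> :: "nat \<Rightarrow> real \<Rightarrow> real"
  assumes "assumption_A n muA muJ beta zeta f"
    and "\<alpha> > 0"
    and "\<forall>i<n. X_alpha \<alpha> (\<phi> i)"
    and "\<forall>i<n. \<forall>t\<le>0. \<phi> i t \<ge> 0"
    and "\<forall>i<n. tau0 i > 0"
    and "is_solution_S n muA muJ beta zeta f \<phi> tau0 A \<tau>"
  shows "\<exists>M. \<forall>i<n. \<forall>t\<ge>0. \<bar>A i t\<bar> \<le> M"
proof -
  interpret species_system n muA muJ beta zeta f \<phi> tau0 A \<tau>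
    using assms(1,5,6) by unfold_locales auto
  have "\<forall>\<^sub>F M in at_top. \<forall>i\<in>{..<n}. \<forall>ts\<ge>0. (\<forall>j<n. \<forall>s\<in>{0..<ts}. A j s < M) \<longrightarrow> A i ts < M"
    using eventually_no_hitting by (intro eventually_ball_finite) auto
  then obtain M where
    M: "\<And>i ts. i < n \<Longrightarrow> 0 \<le> ts \<Longrightarrow> (\<forall>j<n. \<forall>s\<in>{0..<ts}. A j s < M) \<Longrightarrow> A i ts < M"
    unfolding eventually_at_top_linorder by blast
  have cont: "\<And>j. j \<in> {..<n} \<Longrightarrow> continuous_on {0..} (A j)"
    using A_continuous by (auto intro: continuous_on_subset)
  have "A i t < M" if "i < n" "0 \<le> t" for i t
  proof (rule ccontr)
    assume "\<not> A i t < M"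
    then have "M \<le> A i t" by simp
    moreover have "i \<in> {..<n}"
      using \<open>i < n\<close> by simp
    ultimately obtain ts k where "0 \<le> ts" "k \<in> {..<n}" "M \<le> A k ts"
      "\<And>j s. j \<in> {..<n} \<Longrightarrow> s \<in> {0..<ts} \<Longrightarrow> A j s < M"
      using first_hitting_time[of "{..<n}" A i t M, OF finite_lessThan cont _ \<open>0 \<le> t\<close>] by blast
    then show False
      using M[of k ts] by auto
  qed
  then show ?thesis
    using A_nonneg by (intro exI[of _ M]) (auto simp: less_imp_le)
qed

end
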